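(* For $\lambda>0$ and $c>0$, let $V\sim\mathrm{Exp}(\lambda)$, let $V_1,V_2$ be independent copies of $V$, $V_{(1:2)}=\min(V_1,V_2)$, $V_{(2:2)}=\max(V_1,V_2)$, and for $p_0\ge0$, $r\in[0,1]$ define the creator's expected profit $P(p_0,r)=R(p_0,r)-c$, where $$R(p_0,r)=\begin{cases}2p_0+2r\,\mathbb{E}[V] & \text{if } p_0\le (1-r)\mathbb{E}[V_{(1:2)}],\\ p_0+r\,\mathbb{E}[V_{(2:2)}]+p_0\Pr[V_{(1:2)}>p_0] & \text{if } (1-r)\mathbb{E}[V_{(1:2)}]<p_0\le(1-r)\mathbb{E}[V_{(2:2)}],\\ 2p_0\Pr[V>p_0] & \text{if } p_0>(1-r)\mathbb{E}[V_{(2:2)}].\end{cases}$$ Let $u_c^*=\sup_{p_0\ge0,r\in[0,1]}P(p_0,r)$ and $u_{c,r=0}^*=\sup_{p_0\ge0}P(p_0,0)$. Then the set $\mathbb{T}=\{(\lambda,c):\ u_c^*\ge0,\ u_{c,r=0}^*<0,\ \lambda>0,\ c>0\}$ is non-empty.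
   Context: $R$ is the expected revenue of a creator selling a two-unit NFT collection at common mint price $p_0$ with royalty rate $r$ in the presence of a risk-neutral speculator who buys 2, 1 or 0 units in the three price regions respectively; $c$ is the creator's cost. Trade occurs iff the optimal profit is nonnegative. *)

theory Defs
  imports "HOL-Probability.Probability"
begin

definition exp_law :: "real \<Rightarrow> real measure" where
  "exp_law l = density lborel (exponential_density l)"

definition exp_pair_law :: "real \<Rightarrow> (real \<times> real) measure" where
  "exp_pair_law l = exp_law l \<Otimes>\<^sub>M exp_law l"

definition EV :: "real \<Rightarrow> real" where
  "EV l = (\<integral>x. x \<partial>exp_law l)"

definition Emin :: "real \<Rightarrow> real" where
  "Emin l = (\<integral>z. min (fst z) (snd z) \<partial>exp_pair_law l)"

definition Emax :: "real \<Rightarrow> real" where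
  "Emax l = (\<integral>z. max (fst z) (snd z) \<partial>exp_pair_law l)"

definition PrV_gt :: "real \<Rightarrow> real \<Rightarrow> real" where
  "PrV_gt l p = measure (exp_law l) {x. x > p}"

definition PrMin_gt :: "real \<Rightarrow> real \<Rightarrow> real" where
  "PrMin_gt l p = measure (exp_pair_law l) {z. min (fst z) (snd z) > p}"

definition revenue :: "real \<Rightarrow> real \<Rightarrow> real \<Rightarrow> real" where
  "revenue l p0 r =
    (if p0 \<le> (1 - r) * Emin l then 2 * p0 + 2 * r * EV l
     else if p0 \<le> (1 - r) * Emax l then p0 + r * Emax l + p0 * PrMin_gt l p0
     else 2 * p0 * PrV_gt l p0)"

definition profit :: "real \<Rightarrow> real \<Rightarrow> real \<Rightarrow> real \<Rightarrow> real" where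
  "profit l c p0 r = revenue l p0 r - c"

definition u_star :: "real \<Rightarrow> real \<Rightarrow> real" where
  "u_star l c = (SUP pr \<in> {0..} \<times> {0..1}. profit l c (fst pr) (snd pr))"

definition u_star_r0 :: "real \<Rightarrow> real \<Rightarrow> real" where
  "u_star_r0 l c = (SUP p0 \<in> {0..}. profit l c p0 0)"

end

theory Submission
  imports Defs
begin

text \<open>
  Take \<lambda> = 1 and c = 2; any c with (3 + 1/e) / (2\<lambda>) < c \<le> 2/\<lambda> works as well.
  Minting at price 0 with full royalty r = 1 earns 2 E[V] = 2/\<lambda>, so u* \<ge> 0.
  Without royalty, E[min(V1,V2)] = 1/(2\<lambda>), E[max(V1,V2)] = 3/(2\<lambda>) and x e^(-x) \<le> 1/e
  bound the revenue in the three price regions by 1/\<lambda>, (3 + 1/e) / (2\<lambda>) and 2/(e\<lambda>),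
  so the best royalty-free profit is negative. Since R(p0, r) at rate \<lambda> equals R(\<lambda> p0, r)/\<lambda>
  at rate 1, these bounds only need to be checked for \<lambda> = 1.
\<close>

lemma mult_exp_neg_le: "(x::real) * exp (- x) \<le> exp (- 1)"
proof -
  have "x * exp (- x) \<le> exp (x - 1) * exp (- x)"
    using exp_ge_add_one_self[of "x - 1"] by (intro mult_right_mono) simp_all
  also have "\<dots> = exp (- 1)"
    by (simp flip: exp_add)
  finally show ?thesis .
qed

lemma (in pair_prob_space) distr_pair_snd: "distr (M1 \<Otimes>\<^sub>M M2) M2 snd = M2"
proof (rule measure_eqI)
  fix A assume "A \<in> sets (distr (M1 \<Otimes>\<^sub>M M2) M2 snd)"
  then have A: "A \<in> sets M2" by simp
  have "snd -` A \<inter> space (M1 \<Otimes>\<^sub>M M2) = space M1 \<times> A"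
    using sets.sets_into_space[OF A] by (auto simp: space_pair_measure)
  then show "emeasure (distr (M1 \<Otimes>\<^sub>M M2) M2 snd) A = emeasure M2 A"
    using A by (simp add: emeasure_distr M2.emeasure_pair_measure_Times M1.emeasure_space_1)
qed simp

lemma indep_var_fst_snd:
  fixes M1 M2 :: "'a measure"
  assumes "pair_prob_space M1 M2" and "sets M1 = sets S" and "sets M2 = sets T"
  shows "prob_space.indep_var (M1 \<Otimes>\<^sub>M M2) S fst T snd"
proof -
  interpret pair_prob_space M1 M2 by fact
  have fst_law: "distr (M1 \<Otimes>\<^sub>M M2) S fst = M1"
    using assms(2) distr_cong[of "M1 \<Otimes>\<^sub>M M2" "M1 \<Otimes>\<^sub>M M2" S M1 fst fst] M2.distr_pair_fst
    by simp
  have snd_law: "distr (M1 \<Otimes>\<^sub>M M2) T snd = M2"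
    using assms(3) distr_cong[of "M1 \<Otimes>\<^sub>M M2" "M1 \<Otimes>\<^sub>M M2" T M2 snd snd] distr_pair_snd
    by simp
  have joint_law: "distr (M1 \<Otimes>\<^sub>M M2) (S \<Otimes>\<^sub>M T) (\<lambda>x. (fst x, snd x)) = M1 \<Otimes>\<^sub>M M2"
    using distr_id2[OF sets_pair_measure_cong[OF assms(2,3), symmetric]] by simp
  have fst_snd_measurable: "fst \<in> measurable (M1 \<Otimes>\<^sub>M M2) S" "snd \<in> measurable (M1 \<Otimes>\<^sub>M M2) T"
    using measurable_cong_sets[OF refl assms(2)] measurable_cong_sets[OF refl assms(3)] by auto
  show ?thesis
    using fst_law snd_law joint_law fst_snd_measurable by (simp add: indep_var_distribution_eq)
qed

lemma prob_space_exp_law: "0 < l \<Longrightarrow> prob_space (exp_law l)"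
  unfolding exp_law_def by (rule prob_space_exponential_density)

lemma sets_exp_law [simp, measurable_cong]: "sets (exp_law l) = sets borel"
  by (simp add: exp_law_def)

lemma space_exp_law [simp]: "space (exp_law l) = UNIV"
  by (simp add: exp_law_def)

lemma exp_law_distributedI:
  "distr M lborel X = exp_law l \<Longrightarrow> X \<in> borel_measurable M \<Longrightarrow>
    distributed M lborel X (exponential_density l)"
  unfolding distributed_def exp_law_def by simp

lemma exp_law_distributed: "distributed (exp_law l) lborel (\<lambda>x. x) (exponential_density l)"
  by (simp add: distributed_def exp_law_def distr_id2)

lemma pair_prob_space_exp_law: "0 < l \<Longrightarrow> pair_prob_space (exp_law l) (exp_law l)"
  by (simp add: pair_prob_space_def pair_sigma_finite_def prob_space_exp_law
      prob_space_imp_sigma_finite)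

context
  fixes l :: real
  assumes l_pos: "0 < l"
begin

interpretation V: pair_prob_space "exp_law l" "exp_law l"
  by (rule pair_prob_space_exp_law[OF l_pos])

lemma prob_space_exp_pair_law: "prob_space (exp_pair_law l)"
  unfolding exp_pair_law_def by (rule V.P.prob_space_axioms)

lemma exp_pair_law_fst: "distributed (exp_pair_law l) lborel fst (exponential_density l)"
proof (rule exp_law_distributedI)
  have "distr (exp_pair_law l) lborel fst = distr (exp_pair_law l) (exp_law l) fst"
    by (rule distr_cong) simp_all
  then show "distr (exp_pair_law l) lborel fst = exp_law l"
    unfolding exp_pair_law_def
    using prob_space.distr_pair_fst[OF prob_space_exp_law[OF l_pos]] by simp
  show "fst \<in> borel_measurable (exp_pair_law l)"
    unfolding exp_pair_law_def by measurable
qed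

lemma exp_pair_law_snd: "distributed (exp_pair_law l) lborel snd (exponential_density l)"
proof (rule exp_law_distributedI)
  have "distr (exp_pair_law l) lborel snd = distr (exp_pair_law l) (exp_law l) snd"
    by (rule distr_cong) simp_all
  then show "distr (exp_pair_law l) lborel snd = exp_law l"
    unfolding exp_pair_law_def using V.distr_pair_snd by simp
  show "snd \<in> borel_measurable (exp_pair_law l)"
    unfolding exp_pair_law_def by measurable
qed

lemma exp_pair_law_indep: "prob_space.indep_var (exp_pair_law l) borel fst borel snd"
  unfolding exp_pair_law_def
  by (rule indep_var_fst_snd[OF pair_prob_space_exp_law[OF l_pos] sets_exp_law sets_exp_law])

lemma exp_pair_law_min:
  "distributed (exp_pair_law l) lborel (\<lambda>z. min (fst z) (snd z)) (exponential_density (2 * l))"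
  using prob_space.exponential_distributed_min[OF prob_space_exp_pair_law l_pos l_pos
      exp_pair_law_fst exp_pair_law_snd exp_pair_law_indep]
  by (simp only: mult_2)

lemma EV_exp_law: "EV l = 1 / l"
  unfolding EV_def
  using prob_space.exponential_distributed_expectation[OF prob_space_exp_law[OF l_pos] l_pos
      exp_law_distributed] by simp

lemma Emin_exp_law: "Emin l = 1 / (2 * l)"
  unfolding Emin_def
  using prob_space.exponential_distributed_expectation[OF prob_space_exp_pair_law _
      exp_pair_law_min] l_pos by simp

lemma Emax_exp_law: "Emax l = 3 / (2 * l)"
proof -
  have integrable: "integrable (exp_pair_law l) X"
    if "distributed (exp_pair_law l) lborel X (exponential_density k)" "0 < k" for X k
    using prob_space.erlang_ith_moment_integrable[OF prob_space_exp_pair_law \<open>0 < k\<close> that(1), of 1]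
    by simp
  have mean: "(\<integral>z. X z \<partial>exp_pair_law l) = 1 / k"
    if "distributed (exp_pair_law l) lborel X (exponential_density k)" "0 < k" for X k
    using prob_space.exponential_distributed_expectation[OF prob_space_exp_pair_law \<open>0 < k\<close> that(1)] .
  have "Emax l = (\<integral>z. fst z + snd z - min (fst z) (snd z) \<partial>exp_pair_law l)"
    unfolding Emax_def by (rule Bochner_Integration.integral_cong) auto
  also have "\<dots> = 1 / l + 1 / l - 1 / (2 * l)"
    using l_pos exp_pair_law_fst exp_pair_law_snd exp_pair_law_min
    by (simp add: integrable mean)
  also have "\<dots> = 3 / (2 * l)"
    using l_pos by (simp add: field_simps)
  finally show ?thesis .
qed

lemma PrV_gt_exp_law: "0 \<le> p \<Longrightarrow> PrV_gt l p = exp (- l * p)"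
  unfolding PrV_gt_def
  using prob_space.exponential_distributedD_gt[OF prob_space_exp_law[OF l_pos]
      exp_law_distributed _ l_pos, of p]
  by (simp add: mult.commute)

lemma PrMin_gt_exp_law: "0 \<le> p \<Longrightarrow> PrMin_gt l p = exp (- 2 * l * p)"
  unfolding PrMin_gt_def
  using prob_space.exponential_distributedD_gt[OF prob_space_exp_pair_law exp_pair_law_min _, of p]
    l_pos
  by (simp add: exp_pair_law_def space_pair_measure mult_ac)

lemma revenue_exp_law:
  assumes "0 \<le> p"
  shows "revenue l p r =
    (if p \<le> (1 - r) / (2 * l) then 2 * p + 2 * r / l
     else if p \<le> 3 * (1 - r) / (2 * l) then p + 3 * r / (2 * l) + p * exp (- 2 * l * p)
     else 2 * p * exp (- l * p))"
  unfolding revenue_def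
  using assms
  by (simp add: EV_exp_law Emin_exp_law Emax_exp_law PrV_gt_exp_law PrMin_gt_exp_law mult.commute)

end

lemma revenue_scaling:
  assumes "0 < l" and "0 \<le> p"
  shows "revenue l p r = revenue 1 (l * p) r / l"
  using assms revenue_exp_law[OF assms] revenue_exp_law[of 1 "l * p" r]
  by (simp add: field_simps)

lemma revenue_unit_rate_le:
  assumes "0 \<le> p" "0 \<le> r" "r \<le> 1"
  shows "revenue 1 p r \<le> 3"
proof -
  have "p * exp (- 2 * p) \<le> p"
    using assms(1) by (simp add: mult_left_le)
  moreover have "2 * p * exp (- p) \<le> 2 * exp (- 1)"
    using mult_exp_neg_le[of p] by simp
  moreover have "exp (- 1) < (1::real)"
    by simp
  ultimately show ?thesis
    unfolding revenue_exp_law[OF zero_less_one assms(1)]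
    using assms by (simp split: if_split; linarith)
qed

lemma revenue_unit_rate_no_royalty_le:
  assumes "0 \<le> p"
  shows "revenue 1 p 0 \<le> (3 + exp (- 1)) / 2"
proof -
  have "p * exp (- 2 * p) \<le> exp (- 1) / 2"
    using mult_exp_neg_le[of "2 * p"] by simp
  moreover have "2 * p * exp (- p) \<le> 2 * exp (- 1)"
    using mult_exp_neg_le[of p] by simp
  moreover have "0 < exp (- 1::real)" "exp (- 1) < (1::real)"
    by simp_all
  ultimately show ?thesis
    unfolding revenue_exp_law[OF zero_less_one assms]
    using assms by (simp split: if_split; linarith)
qed

lemma revenue_le:
  assumes "0 < l" "0 \<le> p" "0 \<le> r" "r \<le> 1"
  shows "revenue l p r \<le> 3 / l"
proof -
  have "revenue l p r = revenue 1 (l * p) r / l"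
    using assms(1,2) by (rule revenue_scaling)
  also have "\<dots> \<le> 3 / l"
    using assms by (intro divide_right_mono revenue_unit_rate_le) simp_all
  finally show ?thesis .
qed

lemma revenue_no_royalty_le:
  assumes "0 < l" "0 \<le> p"
  shows "revenue l p 0 \<le> (3 + exp (- 1)) / (2 * l)"
proof -
  have "revenue l p 0 = revenue 1 (l * p) 0 / l"
    using assms by (rule revenue_scaling)
  also have "\<dots> \<le> (3 + exp (- 1)) / 2 / l"
    using assms by (intro divide_right_mono revenue_unit_rate_no_royalty_le) simp_all
  finally show ?thesis
    by simp
qed

lemma u_star_nonneg:
  assumes "0 < l" and "c \<le> 2 / l"
  shows "0 \<le> u_star l c"
proof -
  have bdd: "bdd_above ((\<lambda>pr. profit l c (fst pr) (snd pr)) ` ({0..} \<times> {0..1}))"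
    using revenue_le[OF assms(1)] by (intro bdd_aboveI[of _ "3 / l - c"]) (auto simp: profit_def)
  have "profit l c 0 1 \<le> u_star l c"
    unfolding u_star_def using cSUP_upper[OF _ bdd, of "(0, 1)"] by simp
  moreover have "profit l c 0 1 = 2 / l - c"
    using revenue_exp_law[OF assms(1), of 0 1] by (simp add: profit_def)
  ultimately show ?thesis
    using assms(2) by simp
qed

lemma u_star_r0_neg:
  assumes "0 < l" and "(3 + exp (- 1)) / (2 * l) < c"
  shows "u_star_r0 l c < 0"
proof -
  have "u_star_r0 l c \<le> (3 + exp (- 1)) / (2 * l) - c"
    unfolding u_star_r0_def
    using revenue_no_royalty_le[OF assms(1)] by (intro cSUP_least) (auto simp: profit_def)
  then show ?thesis
    using assms(2) by simp
qed

theorem corollary6: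
  shows "{(l, c). u_star (l::real) (c::real) \<ge> 0 \<and> u_star_r0 l c < 0 \<and> l > 0 \<and> c > 0} \<noteq> {}"
proof -
  have "0 \<le> u_star 1 2"
    by (rule u_star_nonneg) simp_all
  moreover have "u_star_r0 1 2 < 0"
    by (rule u_star_r0_neg) simp_all
  ultimately have "(1, 2) \<in> {(l, c). u_star l c \<ge> 0 \<and> u_star_r0 l c < 0 \<and> l > 0 \<and> c > 0}"
    by simp
  then show ?thesis
    by blast
qed

end
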